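(* Let $F(x,\theta,\xi)$ be a model with parameter blocks $\theta=(\theta_0,\dots,\theta_L)$ and $\xi=(\xi_0,\dots,\xi_{L-1})$ such that $F(x,\theta,\xi)\in\{-1,+1\}$ for all $x\in\mathcal{X}$. Suppose there exist $a_0,\dots,a_L,b_0,\dots,b_{L-1}>0$ such that whenever $\|\hat\theta_i-\theta_i\|_2\le a_i$ for all $i$ and $\|\hat\xi_i-\xi_i\|_2\le b_i$ for all $i$, we have $|F(x,\theta,\xi)-F(x,\hat\theta,\hat\xi)|<1$ for all $x\in\mathcal{X}$. Then for all $x\in\mathcal{X}$, $m_F((\theta,\xi),x,\mathbf{1}(F(x,\theta,\xi)\ge0))\ge\min\{a_0,\dots,a_L,b_0,\dots,b_{L-1}\}$. The same lower bound holds for $m_{F'}(\theta',x,\mathbf{1}(F'(x,\theta')\ge0))$ for any layer-based weight-shared model $F'(x,\theta')=F(x,\tau^{(1)}(\theta'),\tau^{(2)}(\theta'))$ with $\tau^{(1)}(\theta')=\theta$, $\tau^{(2)}(\theta')=\xi$.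
   Context: All-layer margin of an architecture $F$ with parameter vector $\vartheta$: $m_F(\vartheta,x,y)=\min\{\|\delta\|_2:(y-0.5)F(x,\vartheta+\delta)\le0\}$ for $y\in\{0,1\}$. Layer-based weight sharing: $\theta'\in\mathbb{R}^{d'}$, and each component map $\tau^{(1)}_i$ (producing $\theta_i$) and $\tau^{(2)}_i$ (producing $\xi_i$) has the form $\theta'\mapsto(\theta'_{\pi_1},\dots,\theta'_{\pi_{b}})$ for distinct indices $\pi_1,\dots,\pi_b\in[d']$ (no coordinate of $\theta'$ is duplicated within one layer). *)

theory Defs
  imports "HOL-Analysis.Analysis"
begin

text \<open>A parameter block (a vector in R^d) is a real list; a family of blocks is a list of
  such lists. Euclidean norms are taken over all entries.\<close>

definition vnorm :: "real list \<Rightarrow> real" where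
  "vnorm v = sqrt (\<Sum>r\<leftarrow>v. r\<^sup>2)"

definition vadd :: "real list \<Rightarrow> real list \<Rightarrow> real list" where
  "vadd u v = map2 (+) u v"

definition vsub :: "real list \<Rightarrow> real list \<Rightarrow> real list" where
  "vsub u v = map2 (-) u v"

definition same_shape :: "real list list \<Rightarrow> real list list \<Rightarrow> bool" where
  "same_shape u v \<longleftrightarrow> length u = length v \<and> (\<forall>i<length u. length (u!i) = length (v!i))"

definition badd :: "real list list \<Rightarrow> real list list \<Rightarrow> real list list" where
  "badd u v = map2 vadd u v"

definition bsqnorm :: "real list list \<Rightarrow> real" where
  "bsqnorm u = (\<Sum>b\<leftarrow>u. \<Sum>r\<leftarrow>b. r\<^sup>2)"

text \<open>All-layer margin of a model F(x,theta,xi) at parameter vector (theta,xi):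
  infimum of the Euclidean norm of the full perturbation (delta_theta, delta_xi)
  flipping the prediction; infimum of the empty set is +infinity.\<close>

definition margin2 ::
  "('x \<Rightarrow> real list list \<Rightarrow> real list list \<Rightarrow> real) \<Rightarrow> real list list \<Rightarrow> real list list
    \<Rightarrow> 'x \<Rightarrow> real \<Rightarrow> ereal" where
  "margin2 F \<theta> \<xi> x y = Inf {ereal (sqrt (bsqnorm d\<theta> + bsqnorm d\<xi>)) | d\<theta> d\<xi>.
      same_shape d\<theta> \<theta> \<and> same_shape d\<xi> \<xi> \<and>
      (y - 1/2) * F x (badd \<theta> d\<theta>) (badd \<xi> d\<xi>) \<le> 0}"

text \<open>Layer-based weight sharing: each layer map is given by a list of distinct indices
  into theta' :: R^{d'}.\<close>

definition share :: "nat list list \<Rightarrow> real list \<Rightarrow> real list list" where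
  "share P \<theta>' = map (\<lambda>\<pi>. map (\<lambda>j. \<theta>' ! j) \<pi>) P"

definition layer_sharing :: "nat \<Rightarrow> nat list list \<Rightarrow> bool" where
  "layer_sharing d' P \<longleftrightarrow> (\<forall>\<pi>\<in>set P. distinct \<pi> \<and> (\<forall>j\<in>set \<pi>. j < d'))"

definition margin_shared ::
  "('x \<Rightarrow> real list list \<Rightarrow> real list list \<Rightarrow> real) \<Rightarrow> nat list list \<Rightarrow> nat list list
    \<Rightarrow> real list \<Rightarrow> 'x \<Rightarrow> real \<Rightarrow> ereal" where
  "margin_shared F P1 P2 \<theta>' x y = Inf {ereal (vnorm d) | d.
      length d = length \<theta>' \<and>
      (y - 1/2) * F x (share P1 (vadd \<theta>' d)) (share P2 (vadd \<theta>' d)) \<le> 0}"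

end

theory Submission
  imports Defs
begin

text \<open>A perturbation flipping the predicted label moves a prediction in {-1, 1} by at
  least 1, so it cannot be within all the robustness radii a_i, b_i at once. Hence one of
  its blocks has norm at least min(a, b), and so does the whole perturbation, since every
  block norm is bounded by the total norm. Under layer-based weight sharing each block of the
  induced perturbation selects distinct coordinates of the perturbation of theta', so its
  norm is again bounded by that of theta'.\<close>

lemma sign_flip_distance:
  fixes s v :: real
  assumes "s \<in> {-1, 1}" and "(of_bool (s \<ge> 0) - 1/2) * v \<le> 0"
  shows "1 \<le> \<bar>s - v\<bar>"
  using assms by (auto simp: mult_le_0_iff)

lemma Min_radii_le_flip_displacement:
  fixes s v r :: real and a b d\<theta> d\<xi> :: "nat \<Rightarrow> real"
  assumes robust: "(\<forall>i\<le>L. d\<theta> i \<le> a i) \<and> (\<forall>i<L. d\<xi> i \<le> b i) \<longrightarrow> \<bar>s - v\<bar> < 1"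
    and s: "s \<in> {-1, 1}" and flip: "(of_bool (s \<ge> 0) - 1/2) * v \<le> 0"
    and d\<theta>_le: "\<forall>i\<le>L. d\<theta> i \<le> r" and d\<xi>_le: "\<forall>i<L. d\<xi> i \<le> r"
  shows "Min (a ` {..L} \<union> b ` {..<L}) \<le> r"
proof (rule ccontr)
  assume "\<not> ?thesis"
  moreover have "\<forall>i\<le>L. Min (a ` {..L} \<union> b ` {..<L}) \<le> a i"
    and "\<forall>i<L. Min (a ` {..L} \<union> b ` {..<L}) \<le> b i"
    by (auto intro: Min_le)
  ultimately have "\<forall>i\<le>L. r < a i" "\<forall>i<L. r < b i" by (meson not_le order_less_le_trans)+
  with d\<theta>_le d\<xi>_le have "\<bar>s - v\<bar> < 1"
    using robust by force
  with sign_flip_distance[OF s flip] show False by simp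
qed

lemma vsub_vadd: "length u = length v \<Longrightarrow> vsub (vadd u v) u = v"
  unfolding vsub_def vadd_def by (induction u v rule: list_induct2) auto

lemma same_shape_badd: "same_shape d \<theta> \<Longrightarrow> same_shape (badd \<theta> d) \<theta>"
  by (auto simp: same_shape_def badd_def vadd_def)

lemma vsub_badd_nth:
  "same_shape d \<theta> \<Longrightarrow> i < length \<theta> \<Longrightarrow> vsub (badd \<theta> d ! i) (\<theta> ! i) = d ! i"
  by (auto simp: badd_def same_shape_def intro!: vsub_vadd)

lemma bsqnorm_nonneg: "0 \<le> bsqnorm u"
  unfolding bsqnorm_def by (auto intro!: sum_list_nonneg)

lemma vnorm_nth_le_sqrt_bsqnorm:
  assumes "i < length u"
  shows "vnorm (u ! i) \<le> sqrt (bsqnorm u)"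
proof -
  have "bsqnorm u = (\<Sum>k<length u. \<Sum>r\<leftarrow>u ! k. r\<^sup>2)"
    unfolding bsqnorm_def by (simp add: sum_list_sum_nth atLeast0LessThan)
  also have "\<dots> \<ge> (\<Sum>r\<leftarrow>u ! i. r\<^sup>2)"
    by (rule member_le_sum) (use assms in \<open>auto intro!: sum_list_nonneg\<close>)
  finally show ?thesis
    unfolding vnorm_def by (rule real_sqrt_le_mono)
qed

lemma vnorm_vsub_badd_nth_le:
  assumes "same_shape d \<theta>" "i < length \<theta>" "0 \<le> c"
  shows "vnorm (vsub (badd \<theta> d ! i) (\<theta> ! i)) \<le> sqrt (bsqnorm d + c)"
proof -
  have "vnorm (vsub (badd \<theta> d ! i) (\<theta> ! i)) = vnorm (d ! i)"
    using assms(1,2) by (simp add: vsub_badd_nth)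
  also have "\<dots> \<le> sqrt (bsqnorm d)"
    using assms(1,2) by (intro vnorm_nth_le_sqrt_bsqnorm) (simp add: same_shape_def)
  also have "\<dots> \<le> sqrt (bsqnorm d + c)"
    using assms(3) by simp
  finally show ?thesis .
qed

lemma same_shape_share: "same_shape (share P u) (share P v)"
  by (simp add: same_shape_def share_def)

lemma sum_squares_select_le:
  fixes d :: "real list"
  assumes "distinct \<pi>" "\<forall>j\<in>set \<pi>. j < length d"
  shows "(\<Sum>r\<leftarrow>map (\<lambda>j. d ! j) \<pi>. r\<^sup>2) \<le> (\<Sum>r\<leftarrow>d. r\<^sup>2)"
proof -
  have "(\<Sum>r\<leftarrow>map (\<lambda>j. d ! j) \<pi>. r\<^sup>2) = (\<Sum>j\<in>set \<pi>. (d ! j)\<^sup>2)"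
    using assms(1) by (simp add: sum_list_distinct_conv_sum_set o_def)
  also have "\<dots> \<le> (\<Sum>j<length d. (d ! j)\<^sup>2)"
    by (rule sum_mono2) (use assms(2) in auto)
  finally show ?thesis
    by (simp add: sum_list_sum_nth atLeast0LessThan)
qed

lemma vnorm_vsub_share_nth_le:
  assumes "layer_sharing (length \<theta>') P" "i < length P" "length d = length \<theta>'"
  shows "vnorm (vsub (share P (vadd \<theta>' d) ! i) (share P \<theta>' ! i)) \<le> vnorm d"
proof -
  have \<pi>: "distinct (P ! i)" "\<forall>j\<in>set (P ! i). j < length d"
    using assms nth_mem[OF assms(2)] unfolding layer_sharing_def by auto
  have "vsub (share P (vadd \<theta>' d) ! i) (share P \<theta>' ! i) = map (\<lambda>j. d ! j) (P ! i)"
    using assms(2,3) \<pi>(2)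
    by (auto simp: share_def vsub_def vadd_def map2_map_map intro!: nth_equalityI)
  then show ?thesis
    unfolding vnorm_def using sum_squares_select_le[OF \<pi>] by (simp add: real_sqrt_le_mono)
qed

lemma ereal_le_margin2I:
  assumes "\<And>d\<theta> d\<xi>. same_shape d\<theta> \<theta> \<Longrightarrow> same_shape d\<xi> \<xi>
      \<Longrightarrow> (y - 1/2) * F x (badd \<theta> d\<theta>) (badd \<xi> d\<xi>) \<le> 0
      \<Longrightarrow> m \<le> sqrt (bsqnorm d\<theta> + bsqnorm d\<xi>)"
  shows "ereal m \<le> margin2 F \<theta> \<xi> x y"
  unfolding margin2_def using assms by (auto intro!: Inf_greatest)

lemma ereal_le_margin_sharedI:
  assumes "\<And>d. length d = length \<theta>'
      \<Longrightarrow> (y - 1/2) * F x (share P1 (vadd \<theta>' d)) (share P2 (vadd \<theta>' d)) \<le> 0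
      \<Longrightarrow> m \<le> vnorm d"
  shows "ereal m \<le> margin_shared F P1 P2 \<theta>' x y"
  unfolding margin_shared_def using assms by (auto intro!: Inf_greatest)

lemma margin2_ge_Min_radii:
  fixes F :: "'x \<Rightarrow> real list list \<Rightarrow> real list list \<Rightarrow> real"
  assumes len\<theta>: "length \<theta> = L + 1" and len\<xi>: "length \<xi> = L"
    and sign: "F x \<theta> \<xi> \<in> {-1, 1}"
    and robust: "\<forall>\<theta>h \<xi>h. same_shape \<theta>h \<theta> \<and> same_shape \<xi>h \<xi>
        \<and> (\<forall>i\<le>L. vnorm (vsub (\<theta>h!i) (\<theta>!i)) \<le> a i)
        \<and> (\<forall>i<L. vnorm (vsub (\<xi>h!i) (\<xi>!i)) \<le> b i)
        \<longrightarrow> \<bar>F x \<theta> \<xi> - F x \<theta>h \<xi>h\<bar> < 1"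
  shows "ereal (Min (a ` {..L} \<union> b ` {..<L})) \<le> margin2 F \<theta> \<xi> x (of_bool (F x \<theta> \<xi> \<ge> 0))"
proof (rule ereal_le_margin2I)
  fix d\<theta> d\<xi>
  assume sh: "same_shape d\<theta> \<theta>" "same_shape d\<xi> \<xi>"
    and flip: "(of_bool (F x \<theta> \<xi> \<ge> 0) - 1/2) * F x (badd \<theta> d\<theta>) (badd \<xi> d\<xi>) \<le> 0"
  show "Min (a ` {..L} \<union> b ` {..<L}) \<le> sqrt (bsqnorm d\<theta> + bsqnorm d\<xi>)"
  proof (rule Min_radii_le_flip_displacement[OF _ sign flip])
    show "\<forall>i\<le>L. vnorm (vsub (badd \<theta> d\<theta> ! i) (\<theta> ! i)) \<le> sqrt (bsqnorm d\<theta> + bsqnorm d\<xi>)"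
      using sh len\<theta> bsqnorm_nonneg by (auto intro!: vnorm_vsub_badd_nth_le)
    show "\<forall>i<L. vnorm (vsub (badd \<xi> d\<xi> ! i) (\<xi> ! i)) \<le> sqrt (bsqnorm d\<theta> + bsqnorm d\<xi>)"
      using sh len\<xi> bsqnorm_nonneg vnorm_vsub_badd_nth_le[of d\<xi> \<xi> _ "bsqnorm d\<theta>"]
      by (simp add: add.commute)
  qed (use robust sh in \<open>simp add: same_shape_badd\<close>)
qed

lemma margin_shared_ge_Min_radii:
  fixes F :: "'x \<Rightarrow> real list list \<Rightarrow> real list list \<Rightarrow> real"
  assumes len\<theta>: "length (share P1 \<theta>') = L + 1" and len\<xi>: "length (share P2 \<theta>') = L"
    and sharing: "layer_sharing (length \<theta>') P1" "layer_sharing (length \<theta>') P2"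
    and sign: "F x (share P1 \<theta>') (share P2 \<theta>') \<in> {-1, 1}"
    and robust: "\<forall>\<theta>h \<xi>h. same_shape \<theta>h (share P1 \<theta>') \<and> same_shape \<xi>h (share P2 \<theta>')
        \<and> (\<forall>i\<le>L. vnorm (vsub (\<theta>h!i) (share P1 \<theta>' ! i)) \<le> a i)
        \<and> (\<forall>i<L. vnorm (vsub (\<xi>h!i) (share P2 \<theta>' ! i)) \<le> b i)
        \<longrightarrow> \<bar>F x (share P1 \<theta>') (share P2 \<theta>') - F x \<theta>h \<xi>h\<bar> < 1"
  shows "ereal (Min (a ` {..L} \<union> b ` {..<L}))
    \<le> margin_shared F P1 P2 \<theta>' x (of_bool (F x (share P1 \<theta>') (share P2 \<theta>') \<ge> 0))"
proof (rule ereal_le_margin_sharedI)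
  fix d
  assume ld: "length d = length \<theta>'"
    and flip: "(of_bool (F x (share P1 \<theta>') (share P2 \<theta>') \<ge> 0) - 1/2)
      * F x (share P1 (vadd \<theta>' d)) (share P2 (vadd \<theta>' d)) \<le> 0"
  show "Min (a ` {..L} \<union> b ` {..<L}) \<le> vnorm d"
  proof (rule Min_radii_le_flip_displacement[OF _ sign flip])
    show "\<forall>i\<le>L. vnorm (vsub (share P1 (vadd \<theta>' d) ! i) (share P1 \<theta>' ! i)) \<le> vnorm d"
      using len\<theta> vnorm_vsub_share_nth_le[OF sharing(1) _ ld] by (simp add: share_def)
    show "\<forall>i<L. vnorm (vsub (share P2 (vadd \<theta>' d) ! i) (share P2 \<theta>' ! i)) \<le> vnorm d"
      using len\<xi> vnorm_vsub_share_nth_le[OF sharing(2) _ ld] by (simp add: share_def)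
  qed (use robust in \<open>simp add: same_shape_share\<close>)
qed

theorem mainTheorem12:
  fixes F :: "'x \<Rightarrow> real list list \<Rightarrow> real list list \<Rightarrow> real"
    and X :: "'x set" and L :: nat
    and \<theta> \<xi> :: "real list list" and a b :: "nat \<Rightarrow> real"
  assumes len\<theta>: "length \<theta> = L + 1" and len\<xi>: "length \<xi> = L"
    and sign: "\<forall>x\<in>X. F x \<theta> \<xi> \<in> {-1, 1}"
    and apos: "\<forall>i\<le>L. a i > 0" and bpos: "\<forall>i<L. b i > 0"
    and robust: "\<forall>\<theta>h \<xi>h. same_shape \<theta>h \<theta> \<and> same_shape \<xi>h \<xi>
        \<and> (\<forall>i\<le>L. vnorm (vsub (\<theta>h!i) (\<theta>!i)) \<le> a i)
        \<and> (\<forall>i<L. vnorm (vsub (\<xi>h!i) (\<xi>!i)) \<le> b i)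
        \<longrightarrow> (\<forall>x\<in>X. \<bar>F x \<theta> \<xi> - F x \<theta>h \<xi>h\<bar> < 1)"
  shows "(\<forall>x\<in>X. ereal (Min (a ` {..L} \<union> b ` {..<L}))
            \<le> margin2 F \<theta> \<xi> x (of_bool (F x \<theta> \<xi> \<ge> 0)))
     \<and> (\<forall>d' P1 P2 \<theta>'. length \<theta>' = d' \<and> layer_sharing d' P1 \<and> layer_sharing d' P2
          \<and> share P1 \<theta>' = \<theta> \<and> share P2 \<theta>' = \<xi> \<longrightarrow>
          (\<forall>x\<in>X. ereal (Min (a ` {..L} \<union> b ` {..<L}))
            \<le> margin_shared F P1 P2 \<theta>' x (of_bool (F x (share P1 \<theta>') (share P2 \<theta>') \<ge> 0))))"
proof (intro conjI ballI allI impI)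
  fix x assume "x \<in> X"
  then show "ereal (Min (a ` {..L} \<union> b ` {..<L})) \<le> margin2 F \<theta> \<xi> x (of_bool (F x \<theta> \<xi> \<ge> 0))"
    using sign robust by (intro margin2_ge_Min_radii[OF len\<theta> len\<xi>]) blast+
next
  fix d' P1 P2 \<theta>' x
  assume "length \<theta>' = d' \<and> layer_sharing d' P1 \<and> layer_sharing d' P2
      \<and> share P1 \<theta>' = \<theta> \<and> share P2 \<theta>' = \<xi>" and "x \<in> X"
  then show "ereal (Min (a ` {..L} \<union> b ` {..<L}))
      \<le> margin_shared F P1 P2 \<theta>' x (of_bool (F x (share P1 \<theta>') (share P2 \<theta>') \<ge> 0))"
    using len\<theta> len\<xi> sign robust by (intro margin_shared_ge_Min_radii) auto
qed

end
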